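(* Let $g>0$, $\gamma>0$, $a\in(0,\nu_1)$, and let $\hat\nu:\mathbb R\to[\nu_0,\nu_1]$ be a stretch-limiting constitutive function as in the context. Let $(\lambda,\mu)$ with $\lambda>0$ be the unique solution of $$a\mathbf i+0\,\mathbf k=\int_0^1\frac{\hat\nu(\delta(s))}{\delta(s)}\big(\lambda\mathbf i+(\mu+g\gamma s)\mathbf k\big)\,ds,\qquad \delta(s)=\sqrt{\lambda^2+(\mu+g\gamma s)^2}$$ (the tensile uniform catenary with supports at $\mathbf 0$ and $a\mathbf i$, with tension $N(s)=\delta(s)$). Then the catenary is inextensible, i.e. $\delta(s)\ge N_1$ for all $s\in[0,1]$ (equivalently stretch $\nu\equiv\nu_1$), if and only if $$\nu_1\frac{2N_1}{g\gamma}\sinh^{-1}\frac{g\gamma}{2N_1}\le a<\nu_1.$$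
   Context: Stretch-limited constitutive function: constants $N_0<0<N_1$, $0<\nu_0<1<\nu_1$ with $\hat\nu(N)=\nu_0$ for $N\le N_0$, $\hat\nu(N)=\nu_1$ for $N\ge N_1$, $\hat\nu\in C^\infty([N_0,N_1];[\nu_0,\nu_1])$, $\hat\nu(0)=1$, $\hat\nu'\ge c>0$ on $[N_0,N_1]$. The string is uniform with mass $\gamma$ per unit reference length, parametrized by $s\in[0,1]$, with $\mathbf r(0)=\mathbf 0$, $\mathbf r(1)=a\mathbf i$, contact force $\mathbf n(s)=\lambda\mathbf i+(\mu+g\gamma s)\mathbf k$, and stretch $|\mathbf r_s|=\hat\nu(N)$. It is a known fact (existence and uniqueness of tensile states) that for $a>0$, $a^2<\nu_1^2$ there is exactly one solution $(\lambda,\mu)$ of the displayed equation with $\lambda>0$; for it one has $\mu=-g\gamma/2$. *)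

theory Defs
  imports "HOL-Analysis.Analysis"
begin

definition stretch_limited ::
  "real \<Rightarrow> real \<Rightarrow> real \<Rightarrow> real \<Rightarrow> (real \<Rightarrow> real) \<Rightarrow> bool" where
  "stretch_limited N0 N1 \<nu>0 \<nu>1 \<nu> \<longleftrightarrow>
     N0 < 0 \<and> 0 < N1 \<and> 0 < \<nu>0 \<and> \<nu>0 < 1 \<and> 1 < \<nu>1 \<and>
     (\<forall>N. \<nu>0 \<le> \<nu> N \<and> \<nu> N \<le> \<nu>1) \<and>
     (\<forall>N. N \<le> N0 \<longrightarrow> \<nu> N = \<nu>0) \<and>
     (\<forall>N. N1 \<le> N \<longrightarrow> \<nu> N = \<nu>1) \<and>
     \<nu> 0 = 1 \<and>
     (\<exists>D :: nat \<Rightarrow> real \<Rightarrow> real.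
        (\<forall>x\<in>{N0..N1}. D 0 x = \<nu> x) \<and>
        (\<forall>k. \<forall>x\<in>{N0..N1}. (D k has_real_derivative D (Suc k) x) (at x within {N0..N1})) \<and>
        (\<exists>c>0. \<forall>x\<in>{N0..N1}. c \<le> D 1 x))"

definition cat_delta :: "real \<Rightarrow> real \<Rightarrow> real \<Rightarrow> real \<Rightarrow> real \<Rightarrow> real" where
  "cat_delta g \<gamma> lam \<mu> s = sqrt (lam\<^sup>2 + (\<mu> + g * \<gamma> * s)\<^sup>2)"

end

theory Submission
  imports Defs
begin

text \<open>The vertical equilibrium equation says that \<open>\<phi>(\<mu> + g\<gamma>s)\<close> integrates to zero over
  \<open>[0,1]\<close>, where \<open>\<phi>(t) = \<nu>(\<surd>(\<lambda>\<^sup>2 + t\<^sup>2)) t / \<surd>(\<lambda>\<^sup>2 + t\<^sup>2)\<close> is odd and strictly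
  increasing; pairing \<open>s\<close> with \<open>1 - s\<close> shows that this forces \<open>\<mu> = -g\<gamma>/2\<close>. The tension is
  then smallest at the midpoint, where it equals \<open>\<lambda>\<close>, so the catenary is inextensible iff
  \<open>\<lambda> \<ge> N\<^sub>1\<close>. In that case \<open>\<nu> = \<nu>\<^sub>1\<close> along the string and the horizontal equation
  integrates in closed form to \<open>a = \<nu>\<^sub>1 Q(\<lambda>)\<close> with \<open>Q(x) = (2x/g\<gamma>) arsinh (g\<gamma>/2x)\<close>
  strictly increasing; otherwise \<open>\<nu> \<le> \<nu>\<^sub>1\<close> gives \<open>a \<le> \<nu>\<^sub>1 Q(\<lambda>) < \<nu>\<^sub>1 Q(N\<^sub>1)\<close>.\<close>

lemma stretch_limited_on_transition:
  assumes "stretch_limited N0 N1 \<nu>0 \<nu>1 \<nu>"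
  shows "continuous_on {N0..N1} \<nu>" and "mono_on {N0..N1} \<nu>"
proof -
  from assms obtain D c where
    D0: "\<forall>x\<in>{N0..N1}. D 0 x = \<nu> x"
    and D: "\<forall>k. \<forall>x\<in>{N0..N1}. (D k has_real_derivative D (Suc k) x) (at x within {N0..N1})"
    and "c > 0" and D1: "\<forall>x\<in>{N0..N1}. c \<le> D 1 x"
    unfolding stretch_limited_def by blast
  have cont: "continuous_on {N0..N1} (D 0)"
    using D by (intro DERIV_continuous_on) blast
  then show "continuous_on {N0..N1} \<nu>"
    using D0 continuous_on_eq by blast
  have "D 0 x \<le> D 0 y" if "N0 \<le> x" "x \<le> y" "y \<le> N1" for x y
  proof (rule DERIV_nonneg_imp_increasing_open[OF \<open>x \<le> y\<close>])
    fix z assume "x < z" "z < y"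
    with that have z: "N0 < z" "z < N1" "z \<in> {N0..N1}" by auto
    have "(D 0 has_real_derivative D 1 z) (at z within {N0..N1})"
      using spec[OF D, of 0] z(3) by simp
    then have "DERIV (D 0) z :> D 1 z"
      unfolding at_within_Icc_at[OF z(1,2)] .
    moreover have "c \<le> D 1 z"
      using D1 z(3) by blast
    ultimately show "\<exists>y. DERIV (D 0) z :> y \<and> y \<ge> 0"
      using \<open>c > 0\<close> by (intro exI[of _ "D 1 z"]) simp
  next
    show "continuous_on {x..y} (D 0)"
      using that by (intro continuous_on_subset[OF cont]) auto
  qed
  then show "mono_on {N0..N1} \<nu>"
    using D0 by (auto intro!: mono_onI)
qed

lemma stretch_limited_continuous:
  assumes "stretch_limited N0 N1 \<nu>0 \<nu>1 \<nu>"
  shows "continuous_on UNIV \<nu>"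
proof -
  from assms have "N0 < N1" and below: "\<forall>N\<le>N0. \<nu> N = \<nu>0" and above: "\<forall>N\<ge>N1. \<nu> N = \<nu>1"
    unfolding stretch_limited_def by auto
  have "continuous_on ({..N0} \<union> {N0..N1} \<union> {N1..}) \<nu>"
  proof (intro continuous_on_closed_Un)
    have "continuous_on {..N0} \<nu> \<longleftrightarrow> continuous_on {..N0} (\<lambda>_. \<nu>0)"
      using below by (intro continuous_on_cong) auto
    then show "continuous_on {..N0} \<nu>" by simp
    have "continuous_on {N1..} \<nu> \<longleftrightarrow> continuous_on {N1..} (\<lambda>_. \<nu>1)"
      using above by (intro continuous_on_cong) auto
    then show "continuous_on {N1..} \<nu>" by simp
  qed (use stretch_limited_on_transition(1)[OF assms] in auto)
  moreover have "{..N0} \<union> {N0..N1} \<union> {N1..} = (UNIV :: real set)"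
    using \<open>N0 < N1\<close> by auto
  ultimately show ?thesis by simp
qed

lemma stretch_limited_mono:
  assumes "stretch_limited N0 N1 \<nu>0 \<nu>1 \<nu>"
  shows "mono \<nu>"
proof
  from assms have range: "\<forall>N. \<nu>0 \<le> \<nu> N \<and> \<nu> N \<le> \<nu>1"
    and below: "\<forall>N\<le>N0. \<nu> N = \<nu>0" and above: "\<forall>N\<ge>N1. \<nu> N = \<nu>1"
    unfolding stretch_limited_def by auto
  fix x y :: real assume "x \<le> y"
  consider "x \<le> N0" | "N1 \<le> y" | "N0 \<le> x" "y \<le> N1" by linarith
  then show "\<nu> x \<le> \<nu> y"
  proof cases
    case 3
    then show ?thesis
      using stretch_limited_on_transition(2)[OF assms] \<open>x \<le> y\<close> by (auto elim!: mono_onD)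
  qed (use range below above in auto)
qed

lemma divide_sqrt_less_divide_sqrt:
  fixes u v P R :: real
  assumes "0 \<le> u" "0 < v" "0 < P" "0 < R" "u\<^sup>2 * R < v\<^sup>2 * P"
  shows "u / sqrt P < v / sqrt R"
proof -
  have "sqrt (u\<^sup>2 * R) < sqrt (v\<^sup>2 * P)" using assms(5) by simp
  then have "u * sqrt R < v * sqrt P" using assms by (simp add: real_sqrt_mult)
  then show ?thesis using assms by (simp add: field_simps)
qed

lemma strict_mono_vertical_stretch:
  fixes \<nu> :: "real \<Rightarrow> real" and lam :: real
  assumes "mono \<nu>" and pos: "\<And>N. \<nu> N > 0" and "lam \<noteq> 0"
  shows "strict_mono (\<lambda>t. \<nu> (sqrt (lam\<^sup>2 + t\<^sup>2)) / sqrt (lam\<^sup>2 + t\<^sup>2) * t)"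
proof -
  define \<phi> where "\<phi> = (\<lambda>t. \<nu> (sqrt (lam\<^sup>2 + t\<^sup>2)) / sqrt (lam\<^sup>2 + t\<^sup>2) * t)"
  have lam2: "lam\<^sup>2 > 0" using \<open>lam \<noteq> 0\<close> by simp
  have odd: "\<phi> (-t) = - \<phi> t" for t unfolding \<phi>_def by simp
  have pos_\<phi>: "\<phi> t > 0" if "t > 0" for t
    using that pos[of "sqrt (lam\<^sup>2 + t\<^sup>2)"] lam2 unfolding \<phi>_def by (simp add: add_pos_nonneg)
  have nonneg_less: "\<phi> y < \<phi> x" if "0 \<le> y" "y < x" for x y
  proof -
    have "y\<^sup>2 < x\<^sup>2" using that by (simp add: power_strict_mono)
    then have "\<nu> (sqrt (lam\<^sup>2 + y\<^sup>2)) \<le> \<nu> (sqrt (lam\<^sup>2 + x\<^sup>2))"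
      by (intro monoD[OF \<open>mono \<nu>\<close>]) simp
    moreover have "y / sqrt (lam\<^sup>2 + y\<^sup>2) < x / sqrt (lam\<^sup>2 + x\<^sup>2)"
      using that lam2 \<open>y\<^sup>2 < x\<^sup>2\<close>
      by (intro divide_sqrt_less_divide_sqrt) (auto simp: algebra_simps add_pos_nonneg)
    ultimately have "\<nu> (sqrt (lam\<^sup>2 + y\<^sup>2)) * (y / sqrt (lam\<^sup>2 + y\<^sup>2))
        < \<nu> (sqrt (lam\<^sup>2 + x\<^sup>2)) * (x / sqrt (lam\<^sup>2 + x\<^sup>2))"
      using that pos by (intro mult_le_less_imp_less) auto
    then show ?thesis unfolding \<phi>_def by simp
  qed
  have "strict_mono \<phi>"
  proof (rule strict_monoI)
    fix q p :: real assume "q < p"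
    consider "0 \<le> q" | "p \<le> 0" | "q < 0" "0 < p" by linarith
    then show "\<phi> q < \<phi> p"
    proof cases
      case 2
      then have "\<phi> (-p) < \<phi> (-q)" using nonneg_less \<open>q < p\<close> by auto
      then show ?thesis unfolding odd by simp
    next
      case 3
      then have "\<phi> (-q) > 0" "\<phi> p > 0" using pos_\<phi> by auto
      then show ?thesis unfolding odd by simp
    qed (use nonneg_less \<open>q < p\<close> in auto)
  qed
  then show ?thesis unfolding \<phi>_def .
qed

lemma has_integral_reflect_Icc:
  fixes f :: "real \<Rightarrow> 'b::real_normed_vector"
  assumes "(f has_integral i) {a..b}"
  shows "((\<lambda>x. f (a + b - x)) has_integral i) {a..b}"
  using has_integral_shift_real_ivl[of "\<lambda>x. f (- x)" i "-b" "-a" "-(a + b)"] assms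
  by (simp add: add.commute)

lemma odd_strict_mono_integral_zero_imp_centered:
  fixes \<phi> :: "real \<Rightarrow> real"
  assumes cont: "continuous_on UNIV \<phi>" and "strict_mono \<phi>" and odd: "\<And>t. \<phi> (-t) = - \<phi> t"
    and int: "((\<lambda>s. \<phi> (\<mu> + k * s)) has_integral 0) {0..1}"
  shows "\<mu> = - k / 2"
proof -
  define f where "f s = \<phi> (\<mu> + k * s) + \<phi> (\<mu> + k * (1 - s))" for s
  have "(f has_integral 0) {0..1}"
    using has_integral_add[OF int has_integral_reflect_Icc[OF int]] unfolding f_def by simp
  then have int_f: "integral {0..1} f = 0"
    by (simp add: integral_unique)
  have cont_f: "continuous_on {0..1} f"
    unfolding f_def by (intro continuous_intros continuous_on_compose2[OF cont]) auto
  \<comment> \<open>by oddness, \<open>f s\<close> has the sign of \<open>(\<mu> + k s) - (- \<mu> - k + k s) = 2 \<mu> + k\<close>\<close>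
  have f_sign: "f s < 0 \<longleftrightarrow> 2 * \<mu> + k < 0" "0 < f s \<longleftrightarrow> 0 < 2 * \<mu> + k" for s
  proof -
    have "f s = \<phi> (\<mu> + k * s) - \<phi> (- \<mu> - k + k * s)"
      unfolding f_def using odd[of "\<mu> + k * (1 - s)"] by (simp add: algebra_simps)
    then show "f s < 0 \<longleftrightarrow> 2 * \<mu> + k < 0" "0 < f s \<longleftrightarrow> 0 < 2 * \<mu> + k"
      using strict_mono_less[OF \<open>strict_mono \<phi>\<close>, of "\<mu> + k * s" "- \<mu> - k + k * s"]
        strict_mono_less[OF \<open>strict_mono \<phi>\<close>, of "- \<mu> - k + k * s" "\<mu> + k * s"]
      by auto
  qed
  have nonempty: "{0<..<1::real} \<noteq> {}" by (auto intro: exI[of _ "1/2"])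
  show ?thesis
  proof (rule ccontr)
    assume "\<mu> \<noteq> - k / 2"
    then consider "2 * \<mu> + k < 0" | "0 < 2 * \<mu> + k" by linarith
    then show False
    proof cases
      case 1
      have "integral {0..1} f < integral {0..1} (\<lambda>_::real. 0)"
        by (rule integral_less_real[OF cont_f continuous_on_const nonempty]) (use 1 f_sign in auto)
      then show False using int_f by simp
    next
      case 2
      have "integral {0..1} (\<lambda>_::real. 0) < integral {0..1} f"
        by (rule integral_less_real[OF continuous_on_const cont_f nonempty]) (use 2 f_sign in auto)
      then show False using int_f by simp
    qed
  qed
qed

definition catenary_span :: "real \<Rightarrow> real \<Rightarrow> real" where
  "catenary_span k x = 2 * x / k * arsinh (k / (2 * x))"

lemma has_integral_catenary_integrand:
  fixes x k c a b :: real
  assumes "x > 0" "k \<noteq> 0" "a \<le> b"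
  shows "((\<lambda>s. x / sqrt (x\<^sup>2 + (k * s - c)\<^sup>2)) has_integral
          x / k * arsinh ((k * b - c) / x) - x / k * arsinh ((k * a - c) / x)) {a..b}"
proof (rule fundamental_theorem_of_calculus[OF \<open>a \<le> b\<close>])
  fix s :: real
  have "x\<^sup>2 > 0" using \<open>x > 0\<close> by simp
  then have pos: "sqrt (x\<^sup>2 + (k * s - c)\<^sup>2) > 0"
    by (intro real_sqrt_gt_zero add_pos_nonneg) auto
  have "sqrt (((k * s - c) / x)\<^sup>2 + 1) = sqrt (x\<^sup>2 + (k * s - c)\<^sup>2) / x"
  proof -
    have "((k * s - c) / x)\<^sup>2 + 1 = (x\<^sup>2 + (k * s - c)\<^sup>2) / x\<^sup>2"
      using \<open>x > 0\<close> by (simp add: field_simps power2_eq_square)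
    then show ?thesis using \<open>x > 0\<close> by (simp add: real_sqrt_divide)
  qed
  then have "x / k * (1 / sqrt (((k * s - c) / x)\<^sup>2 + 1) * (k / x))
      = x / sqrt (x\<^sup>2 + (k * s - c)\<^sup>2)"
    using assms pos by (simp add: field_simps)
  moreover have "((\<lambda>s. x / k * arsinh ((k * s - c) / x)) has_real_derivative
      x / k * (1 / sqrt (((k * s - c) / x)\<^sup>2 + 1) * (k / x))) (at s within {a..b})"
    using \<open>x > 0\<close>
    by (intro DERIV_cmult DERIV_chain2[OF arsinh_real_has_field_derivative])
      (auto intro!: derivative_eq_intros)
  ultimately show "((\<lambda>s. x / k * arsinh ((k * s - c) / x)) has_vector_derivative
      x / sqrt (x\<^sup>2 + (k * s - c)\<^sup>2)) (at s within {a..b})"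
    by (simp add: has_real_derivative_iff_has_vector_derivative)
qed

lemma catenary_span_has_integral:
  assumes "x > 0" "k \<noteq> 0"
  shows "((\<lambda>s. x / sqrt (x\<^sup>2 + (k * s - k / 2)\<^sup>2)) has_integral catenary_span k x) {0..1}"
proof -
  have "x / k * arsinh ((k * 1 - k / 2) / x) - x / k * arsinh ((k * 0 - k / 2) / x)
      = catenary_span k x"
    unfolding catenary_span_def by (simp add: field_simps)
  from has_integral_catenary_integrand[OF assms, of 0 1 "k / 2", unfolded this]
  show ?thesis by simp
qed

lemma catenary_span_half_has_integral:
  assumes "x > 0" "k \<noteq> 0"
  shows "((\<lambda>s. x / sqrt (x\<^sup>2 + (k * s - k / 2)\<^sup>2)) has_integral catenary_span k x / 2) {0..1/2}"
proof -
  have "x / k * arsinh ((k * (1/2) - k / 2) / x) - x / k * arsinh ((k * 0 - k / 2) / x)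
      = catenary_span k x / 2"
    unfolding catenary_span_def by (simp add: field_simps)
  from has_integral_catenary_integrand[OF assms, of 0 "1/2" "k / 2", unfolded this]
  show ?thesis by simp
qed

lemma catenary_span_strict_mono:
  assumes "k \<noteq> 0"
  shows "strict_mono_on {0<..} (catenary_span k)"
proof (rule strict_mono_onI)
  fix x1 x2 :: real assume "x1 \<in> {0<..}" "x2 \<in> {0<..}" "x1 < x2"
  then have "x1 > 0" "x2 > 0" by auto
  let ?f = "\<lambda>x s. x / sqrt (x\<^sup>2 + (k * s - k / 2)\<^sup>2)"
  have cont: "continuous_on {0..1/2} (?f x)" if "x > 0" for x
    using that by (intro continuous_intros) (auto simp: add_pos_nonneg)
  \<comment> \<open>the integrands agree at \<open>s = 1/2\<close>, so compare them on \<open>[0, 1/2]\<close> only\<close>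
  have "integral {0..1/2} (?f x1) < integral {0..1/2} (?f x2)"
  proof (rule integral_less_real[OF cont[OF \<open>x1 > 0\<close>] cont[OF \<open>x2 > 0\<close>]])
    show "{0<..<1/2::real} \<noteq> {}" by (auto intro: exI[of _ "1/4"])
    fix s :: real assume "s \<in> {0<..<1/2}"
    then have "(k * s - k / 2)\<^sup>2 > 0" using assms by auto
    moreover have "x1\<^sup>2 < x2\<^sup>2" using \<open>x1 > 0\<close> \<open>x1 < x2\<close> by (simp add: power_strict_mono)
    ultimately show "?f x1 s < ?f x2 s"
      using \<open>x1 > 0\<close> \<open>x2 > 0\<close>
      by (intro divide_sqrt_less_divide_sqrt) (auto simp: algebra_simps add_pos_nonneg)
  qed
  then show "catenary_span k x1 < catenary_span k x2"
    using integral_unique[OF catenary_span_half_has_integral[OF _ assms]] \<open>x1 > 0\<close> \<open>x2 > 0\<close>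
    by simp
qed

lemma cat_delta_centered:
  "cat_delta g \<gamma> lam (- (g * \<gamma>) / 2) s = sqrt (lam\<^sup>2 + (g * \<gamma> * s - g * \<gamma> / 2)\<^sup>2)"
  unfolding cat_delta_def by (simp add: algebra_simps)

lemma cat_delta_centered_ge_iff:
  "(\<forall>s\<in>{0..1}. N \<le> cat_delta g \<gamma> lam (- (g * \<gamma>) / 2) s) \<longleftrightarrow> N \<le> \<bar>lam\<bar>"
proof
  assume "\<forall>s\<in>{0..1}. N \<le> cat_delta g \<gamma> lam (- (g * \<gamma>) / 2) s"
  then have "N \<le> cat_delta g \<gamma> lam (- (g * \<gamma>) / 2) (1/2)" by simp
  then show "N \<le> \<bar>lam\<bar>" unfolding cat_delta_centered by simp
next
  assume "N \<le> \<bar>lam\<bar>"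
  moreover have "\<bar>lam\<bar> \<le> cat_delta g \<gamma> lam \<mu> s" for \<mu> s
    using real_sqrt_le_mono[of "lam\<^sup>2" "lam\<^sup>2 + (\<mu> + g * \<gamma> * s)\<^sup>2"]
    unfolding cat_delta_def by simp
  ultimately show "\<forall>s\<in>{0..1}. N \<le> cat_delta g \<gamma> lam (- (g * \<gamma>) / 2) s"
    by (meson order.trans)
qed

lemma catenary_vertical_balance:
  assumes "stretch_limited N0 N1 \<nu>0 \<nu>1 \<nu>" and "lam \<noteq> 0"
    and "((\<lambda>s. \<nu> (cat_delta g \<gamma> lam \<mu> s) / cat_delta g \<gamma> lam \<mu> s * (\<mu> + g * \<gamma> * s))
            has_integral 0) {0..1}"
  shows "\<mu> = - (g * \<gamma>) / 2"
proof -
  define \<phi> where "\<phi> = (\<lambda>t. \<nu> (sqrt (lam\<^sup>2 + t\<^sup>2)) / sqrt (lam\<^sup>2 + t\<^sup>2) * t)"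
  have "\<nu> N > 0" for N
    using assms(1) unfolding stretch_limited_def by (meson less_le_trans)
  then have "strict_mono \<phi>"
    unfolding \<phi>_def using stretch_limited_mono[OF assms(1)] \<open>lam \<noteq> 0\<close>
    by (intro strict_mono_vertical_stretch)
  moreover have "continuous_on UNIV \<phi>"
    unfolding \<phi>_def using \<open>lam \<noteq> 0\<close>
    by (intro continuous_intros continuous_on_compose2[OF stretch_limited_continuous[OF assms(1)]])
      (auto simp: add_pos_nonneg)
  moreover have "((\<lambda>s. \<phi> (\<mu> + g * \<gamma> * s)) has_integral 0) {0..1}"
    using assms(3) unfolding \<phi>_def cat_delta_def .
  ultimately show ?thesis
    by (intro odd_strict_mono_integral_zero_imp_centered[of \<phi>]) (auto simp: \<phi>_def)
qed

lemma catenary_horizontal_span: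
  assumes "stretch_limited N0 N1 \<nu>0 \<nu>1 \<nu>" and "lam > 0" and "g * \<gamma> \<noteq> 0"
    and horizontal: "((\<lambda>s. \<nu> (cat_delta g \<gamma> lam (- (g * \<gamma>) / 2) s)
                      / cat_delta g \<gamma> lam (- (g * \<gamma>) / 2) s * lam) has_integral a) {0..1}"
  shows "a \<le> \<nu>1 * catenary_span (g * \<gamma>) lam"
    and "N1 \<le> lam \<Longrightarrow> a = \<nu>1 * catenary_span (g * \<gamma>) lam"
proof -
  let ?\<delta> = "cat_delta g \<gamma> lam (- (g * \<gamma>) / 2)"
  from assms(1) have \<nu>_le: "\<nu> N \<le> \<nu>1" and \<nu>_eq: "N1 \<le> N \<Longrightarrow> \<nu> N = \<nu>1" for N
    unfolding stretch_limited_def by auto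
  have \<delta>_ge: "lam \<le> ?\<delta> s" if "s \<in> {0..1}" for s
    using cat_delta_centered_ge_iff[of lam g \<gamma> lam] \<open>lam > 0\<close> that by auto
  have span: "((\<lambda>s. \<nu>1 * (lam / ?\<delta> s)) has_integral \<nu>1 * catenary_span (g * \<gamma>) lam) {0..1}"
    unfolding cat_delta_centered
    by (intro has_integral_mult_right catenary_span_has_integral assms(2,3))
  show "a \<le> \<nu>1 * catenary_span (g * \<gamma>) lam"
  proof (rule has_integral_le[OF horizontal span])
    fix s :: real assume "s \<in> {0..1}"
    then have "0 < ?\<delta> s" using \<delta>_ge \<open>lam > 0\<close> by force
    then have "0 \<le> lam / ?\<delta> s" using \<open>lam > 0\<close> by simp
    from mult_right_mono[OF \<nu>_le this] show "\<nu> (?\<delta> s) / ?\<delta> s * lam \<le> \<nu>1 * (lam / ?\<delta> s)"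
      by simp
  qed
  assume "N1 \<le> lam"
  have "\<nu> (?\<delta> s) / ?\<delta> s * lam = \<nu>1 * (lam / ?\<delta> s)" if "s \<in> {0..1}" for s
    using \<nu>_eq[of "?\<delta> s"] \<delta>_ge[OF that] \<open>N1 \<le> lam\<close> by simp
  then have "((\<lambda>s. \<nu> (?\<delta> s) / ?\<delta> s * lam) has_integral a) {0..1}
      = ((\<lambda>s. \<nu>1 * (lam / ?\<delta> s)) has_integral a) {0..1}"
    by (rule has_integral_cong)
  with span horizontal show "a = \<nu>1 * catenary_span (g * \<gamma>) lam"
    using has_integral_unique by blast
qed

theorem proposition4p2:
  fixes N0 N1 \<nu>0 \<nu>1 g \<gamma> a lam \<mu> :: real and \<nu> :: "real \<Rightarrow> real"
  assumes "stretch_limited N0 N1 \<nu>0 \<nu>1 \<nu>"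
    and "g > 0" and "\<gamma> > 0" and "0 < a" and "a < \<nu>1"
    and "lam > 0"
    and "((\<lambda>s. \<nu> (cat_delta g \<gamma> lam \<mu> s) / cat_delta g \<gamma> lam \<mu> s * lam) has_integral a) {0..1}"
    and "((\<lambda>s. \<nu> (cat_delta g \<gamma> lam \<mu> s) / cat_delta g \<gamma> lam \<mu> s * (\<mu> + g * \<gamma> * s))
            has_integral 0) {0..1}"
  shows "(\<forall>s\<in>{0..1}. cat_delta g \<gamma> lam \<mu> s \<ge> N1) \<longleftrightarrow>
         (\<nu>1 * (2 * N1 / (g * \<gamma>)) * arsinh (g * \<gamma> / (2 * N1)) \<le> a \<and> a < \<nu>1)"
proof -
  from assms(1) have "0 < N1" and "0 < \<nu>1" unfolding stretch_limited_def by auto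
  have k: "g * \<gamma> \<noteq> 0" using assms(2,3) by simp
  have \<mu>: "\<mu> = - (g * \<gamma>) / 2"
    using catenary_vertical_balance[OF assms(1) _ assms(8)] assms(6) by simp
  note span = catenary_horizontal_span[OF assms(1,6) k assms(7)[unfolded \<mu>]]
  have span_mono: "catenary_span (g * \<gamma>) N1 \<le> catenary_span (g * \<gamma>) lam \<longleftrightarrow> N1 \<le> lam"
    using strict_mono_on_less_eq[OF catenary_span_strict_mono[OF k]] \<open>0 < N1\<close> assms(6) by simp
  have "\<nu>1 * catenary_span (g * \<gamma>) N1 \<le> a \<longleftrightarrow> N1 \<le> lam"
  proof (cases "N1 \<le> lam")
    case True
    then show ?thesis using span(2) span_mono \<open>0 < \<nu>1\<close> by simp
  next
    case False
    then have "\<nu>1 * catenary_span (g * \<gamma>) lam < \<nu>1 * catenary_span (g * \<gamma>) N1"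
      using span_mono \<open>0 < \<nu>1\<close> by simp
    then show ?thesis using span(1) False by simp
  qed
  moreover have "(\<forall>s\<in>{0..1}. N1 \<le> cat_delta g \<gamma> lam \<mu> s) \<longleftrightarrow> N1 \<le> lam"
    unfolding \<mu> cat_delta_centered_ge_iff using assms(6) by simp
  moreover have "\<nu>1 * (2 * N1 / (g * \<gamma>)) * arsinh (g * \<gamma> / (2 * N1))
      = \<nu>1 * catenary_span (g * \<gamma>) N1"
    unfolding catenary_span_def by simp
  ultimately show ?thesis
    using assms(5) by simp
qed

end
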